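(* The set $\mathcal M$ of universal distance matrices is nonempty. Moreover, $\mathcal M$ is an everywhere dense $G_\delta$-subset of the cone $\mathcal R$ with respect to the weak topology.
   Context: Let $\mathcal R$ be the set of all infinite real matrices $r=\{r_{i,j}\}_{i,j=1}^\infty$ with $r_{i,i}=0$, $r_{i,j}\ge 0$, $r_{i,j}=r_{j,i}$ and $r_{i,k}+r_{k,j}\ge r_{i,j}$ for all $i,j,k\in\mathbb N$ ("distance matrices"); it carries the weak topology, i.e. the topology of entrywise convergence (product topology on $\mathbb R^{\mathbb N\times\mathbb N}$). A distance matrix is proper if $r_{i,j}>0$ for all $i\ne j$. For $n\in\mathbb N$, $\mathcal R_n$ denotes the analogous set of $n\times n$ distance matrices and $p_n(r)$ denotes the upper-left (NW) $n\times n$ corner of $r$. For $q\in\mathcal R_n$, the set of admissible vectors is $A(q)=\{a\in\mathbb R^n: |a_i-a_j|\le q_{i,j}\le a_i+a_j \text{ for all } i,j=1,\dots,n\}$, i.e. the vectors $a$ such that bordering $q$ by $a$ as an extra last row and column gives a distance matrix of order $n+1$. A proper distance matrix $r\in\mathcal R$ is universal if for every $n\in\mathbb N$, every $a\in A(p_n(r))$ and every $\epsilon>0$ there exists $m\in\mathbb N$ (necessarily $m>n$ can be taken) with $\max_{1\le i\le n}|r_{i,m}-a_i|<\epsilon$; equivalently, for each $n$ the set of vectors $\{(r_{1,j},\dots,r_{n,j})\}_{j>n}$ is dense in $A(p_n(r))$. $\mathcal M$ denotes the set of universal distance matrices. *)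

theory Defs
  imports "HOL-Analysis.Analysis"
begin

text \<open>Infinite real matrices are functions nat => nat => real, indices starting at 0
(index i here corresponds to index i+1 in the paper). The type carries the
product topology (topology of entrywise convergence), instantiated in HOL-Analysis.\<close>

definition dist_matrix :: "(nat \<Rightarrow> nat \<Rightarrow> real) \<Rightarrow> bool" where
  "dist_matrix r \<longleftrightarrow>
     (\<forall>i. r i i = 0) \<and> (\<forall>i j. r i j \<ge> 0) \<and> (\<forall>i j. r i j = r j i) \<and>
     (\<forall>i j k. r i k + r k j \<ge> r i j)"

definition distR :: "(nat \<Rightarrow> nat \<Rightarrow> real) set" where
  "distR = {r. dist_matrix r}"

definition proper_dm :: "(nat \<Rightarrow> nat \<Rightarrow> real) \<Rightarrow> bool" where
  "proper_dm r \<longleftrightarrow> dist_matrix r \<and> (\<forall>i j. i \<noteq> j \<longrightarrow> r i j > 0)"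

text \<open>Vectors in R^n are represented as nat => real restricted to indices < n.\<close>
definition admissible :: "nat \<Rightarrow> (nat \<Rightarrow> nat \<Rightarrow> real) \<Rightarrow> (nat \<Rightarrow> real) \<Rightarrow> bool" where
  "admissible n q a \<longleftrightarrow>
     (\<forall>i<n. \<forall>j<n. \<bar>a i - a j\<bar> \<le> q i j \<and> q i j \<le> a i + a j)"

definition universal :: "(nat \<Rightarrow> nat \<Rightarrow> real) \<Rightarrow> bool" where
  "universal r \<longleftrightarrow> proper_dm r \<and>
     (\<forall>n a. admissible n r a \<longrightarrow>
        (\<forall>\<epsilon>>0. \<exists>m. \<forall>i<n. \<bar>r i m - a i\<bar> < \<epsilon>))"

definition universalM :: "(nat \<Rightarrow> nat \<Rightarrow> real) set" where
  "universalM = {r. universal r}"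

end

theory Submission
  imports Defs
begin

text \<open>A proper finite corner \<open>q\<close> is completed to a universal matrix by adding one point per
  stage: the new point realizes a prescribed strictly admissible rational vector \<open>a\<close> on the
  first points, its distances to the others being given by Katetov's formula
  \<open>x \<mapsto> min\<^sub>i (a\<^sub>i + r\<^sub>x\<^sub>i)\<close>. Enumerating every rational vector infinitely often, the limit
  realizes all of them exactly; since strictly admissible rational vectors are dense in
  \<open>A(q)\<close> for proper \<open>q\<close>, the limit is universal. Completing the corners of small
  off-diagonal perturbations of an arbitrary \<open>r\<close> gives universal matrices converging to \<open>r\<close>.
  Finally, universality is the conjunction of countably many open conditions: properness,
  and for each rational \<open>b\<close> and \<open>k\<close>: if \<open>b\<close> is admissible, then some column is
  \<open>1/(k+1)\<close>-close to \<open>b\<close>.\<close>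

section \<open>Proper corners and admissible vectors\<close>

definition proper_corner :: "nat \<Rightarrow> (nat \<Rightarrow> nat \<Rightarrow> real) \<Rightarrow> bool" where
  "proper_corner n r \<longleftrightarrow>
     (\<forall>i<n. r i i = 0) \<and> (\<forall>i<n. \<forall>j<n. i \<noteq> j \<longrightarrow> 0 < r i j) \<and>
     (\<forall>i<n. \<forall>j<n. r i j = r j i) \<and> (\<forall>i<n. \<forall>j<n. \<forall>k<n. r i j \<le> r i k + r k j)"

lemma proper_cornerD:
  assumes "proper_corner n r"
  shows "i < n \<Longrightarrow> r i i = 0"
    and "i < n \<Longrightarrow> j < n \<Longrightarrow> r i j = r j i"
    and "i < n \<Longrightarrow> j < n \<Longrightarrow> i \<noteq> j \<Longrightarrow> 0 < r i j"
    and "i < n \<Longrightarrow> j < n \<Longrightarrow> k < n \<Longrightarrow> r i j \<le> r i k + r k j"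
  using assms unfolding proper_corner_def by auto

lemma proper_corner_nonneg: "proper_corner n r \<Longrightarrow> i < n \<Longrightarrow> j < n \<Longrightarrow> 0 \<le> r i j"
  by (cases "i = j") (auto dest: proper_cornerD(1,3) intro: less_imp_le)

lemma proper_corner_mono:
  assumes "proper_corner m r" and "n \<le> m"
  shows "proper_corner n r"
  unfolding proper_corner_def
  by (intro conjI allI impI; rule proper_cornerD[OF assms(1)]; use assms(2) in linarith)

lemma proper_corner_cong:
  "(\<And>i j. i < n \<Longrightarrow> j < n \<Longrightarrow> r i j = r' i j) \<Longrightarrow> proper_corner n r \<longleftrightarrow> proper_corner n r'"
  unfolding proper_corner_def by auto

lemma proper_dm_iff_proper_corners: "proper_dm r \<longleftrightarrow> (\<forall>n. proper_corner n r)"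
proof
  assume corners: "\<forall>n. proper_corner n r"
  have entries: "r i i = 0 \<and> r i j = r j i \<and> r i j \<le> r i k + r k j \<and> (i \<noteq> j \<longrightarrow> 0 < r i j)"
    for i j k
  proof -
    let ?n = "Suc (max i (max j k))"
    have "i < ?n" "j < ?n" "k < ?n"
      by auto
    then show ?thesis
      using proper_cornerD[OF corners[rule_format, of ?n]] by simp
  qed
  have "0 \<le> r i j" for i j
    using entries[of i i j] entries[of j i i] by linarith
  with entries show "proper_dm r"
    unfolding proper_dm_def dist_matrix_def by blast
qed (auto simp: proper_dm_def dist_matrix_def proper_corner_def)

definition strictly_admissible :: "nat \<Rightarrow> (nat \<Rightarrow> nat \<Rightarrow> real) \<Rightarrow> (nat \<Rightarrow> real) \<Rightarrow> bool" where
  "strictly_admissible n q a \<longleftrightarrow>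
     (\<forall>i<n. \<forall>j<n. (i \<noteq> j \<longrightarrow> \<bar>a i - a j\<bar> < q i j) \<and> q i j < a i + a j)"

lemma admissibleD:
  "admissible n q a \<Longrightarrow> i < n \<Longrightarrow> j < n \<Longrightarrow> \<bar>a i - a j\<bar> \<le> q i j \<and> q i j \<le> a i + a j"
  unfolding admissible_def by blast

lemma strictly_admissibleD:
  assumes "strictly_admissible n q a" and "i < n" and "j < n"
  shows "q i j < a i + a j" and "i \<noteq> j \<Longrightarrow> \<bar>a i - a j\<bar> < q i j"
  using assms unfolding strictly_admissible_def by auto

lemma strictly_admissible_imp_admissible:
  "proper_corner n q \<Longrightarrow> strictly_admissible n q a \<Longrightarrow> admissible n q a"
  unfolding strictly_admissible_def admissible_def
  by (metis proper_cornerD(1) abs_0 diff_self less_eq_real_def)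

lemma strictly_admissible_pos:
  "proper_corner n q \<Longrightarrow> strictly_admissible n q a \<Longrightarrow> i < n \<Longrightarrow> 0 < a i"
  unfolding strictly_admissible_def by (force dest: proper_cornerD(1))

lemma strictly_admissible_cong:
  "(\<And>i j. i < n \<Longrightarrow> j < n \<Longrightarrow> q i j = q' i j) \<Longrightarrow> (\<And>i. i < n \<Longrightarrow> a i = a' i) \<Longrightarrow>
   strictly_admissible n q a \<longleftrightarrow> strictly_admissible n q' a'"
  unfolding strictly_admissible_def by auto

lemma strictly_admissible_shrink_toward:
  fixes t M :: real
  assumes q: "proper_corner n q" and a: "admissible n q a"
    and M: "\<And>i j. i < n \<Longrightarrow> j < n \<Longrightarrow> q i j < 2 * M" and t: "0 < t" "t \<le> 1"
  shows "strictly_admissible n q (\<lambda>i. (1 - t) * a i + t * M)"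
  unfolding strictly_admissible_def
proof (intro allI impI conjI)
  fix i j assume ij: "i < n" "j < n"
  have bounds: "\<bar>a i - a j\<bar> \<le> q i j" "q i j \<le> a i + a j"
    using admissibleD[OF a ij] by auto
  show "q i j < (1 - t) * a i + t * M + ((1 - t) * a j + t * M)"
  proof -
    have "(1 - t) * q i j \<le> (1 - t) * (a i + a j)"
      using bounds t by (intro mult_left_mono) auto
    moreover have "t * q i j < t * (2 * M)"
      using M[OF ij] t by simp
    ultimately show ?thesis by (simp add: algebra_simps)
  qed
  assume "i \<noteq> j"
  have "\<bar>(1 - t) * a i + t * M - ((1 - t) * a j + t * M)\<bar> = (1 - t) * \<bar>a i - a j\<bar>"
    using t by (simp add: abs_mult flip: right_diff_distrib)
  also have "\<dots> \<le> (1 - t) * q i j"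
    using bounds t by (intro mult_left_mono) auto
  also have "\<dots> < q i j"
    using proper_cornerD(3)[OF q ij \<open>i \<noteq> j\<close>] t by (simp add: algebra_simps)
  finally show "\<bar>(1 - t) * a i + t * M - ((1 - t) * a j + t * M)\<bar> < q i j" .
qed

lemma eventually_all_less:
  fixes n :: nat
  shows "eventually (\<lambda>x. \<forall>i<n. P x i) F \<longleftrightarrow> (\<forall>i<n. eventually (\<lambda>x. P x i) F)"
  using eventually_ball_finite_distrib[of "{..<n}" P F] by (simp add: Ball_def)

lemma eventually_all_close:
  fixes x :: "'a \<Rightarrow> nat \<Rightarrow> real"
  assumes "\<And>i. i < n \<Longrightarrow> ((\<lambda>k. x k i) \<longlongrightarrow> a i) F" and "0 < \<epsilon>"
  shows "eventually (\<lambda>k. \<forall>i<n. \<bar>x k i - a i\<bar> < \<epsilon>) F"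
proof -
  have "eventually (\<lambda>k. dist (x k i) (a i) < \<epsilon>) F" if "i < n" for i
    using tendstoD[OF assms(1)[OF that] assms(2)] .
  then show ?thesis
    by (simp add: eventually_all_less dist_real_def)
qed

lemma strictly_admissible_near:
  assumes q: "proper_corner n q" and a: "admissible n q a" and "0 < \<epsilon>"
  obtains x where "strictly_admissible n q x" and "\<forall>i<n. \<bar>x i - a i\<bar> < \<epsilon>"
proof -
  have "bounded ((\<lambda>(i, j). q i j) ` ({..<n} \<times> {..<n}))"
    by (intro finite_imp_bounded) auto
  then obtain B where "\<forall>v \<in> (\<lambda>(i, j). q i j) ` ({..<n} \<times> {..<n}). \<bar>v\<bar> \<le> B"
    unfolding bounded_real by blast
  then have M: "q i j < 2 * (B + 1)" if "i < n" "j < n" for i j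
    using that by force
  define t :: "nat \<Rightarrow> real" where "t k = inverse (real (Suc k))" for k
  define x where "x k i = (1 - t k) * a i + t k * (B + 1)" for k i
  have "eventually (\<lambda>k. \<forall>i<n. \<bar>x k i - a i\<bar> < \<epsilon>) sequentially"
  proof (rule eventually_all_close[OF _ \<open>0 < \<epsilon>\<close>])
    fix i
    have "(\<lambda>k. (1 - t k) * a i + t k * (B + 1)) \<longlonglongrightarrow> (1 - 0) * a i + 0 * (B + 1)"
      unfolding t_def by (intro tendsto_intros LIMSEQ_inverse_real_of_nat)
    then show "(\<lambda>k. x k i) \<longlonglongrightarrow> a i"
      by (simp add: x_def)
  qed
  then obtain k where "\<forall>i<n. \<bar>x k i - a i\<bar> < \<epsilon>"
    using eventually_happens'[OF sequentially_bot] by blast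
  moreover have "strictly_admissible n q (x k)"
    unfolding x_def t_def
    by (intro strictly_admissible_shrink_toward q a M) (auto simp: inverse_le_1_iff)
  ultimately show ?thesis
    using that by blast
qed

lemma eventually_strictly_admissible:
  assumes x: "strictly_admissible n q x" and y: "\<And>i. i < n \<Longrightarrow> ((\<lambda>k. y k i) \<longlongrightarrow> x i) F"
  shows "eventually (\<lambda>k. strictly_admissible n q (y k)) F"
proof -
  have "eventually (\<lambda>k. (i \<noteq> j \<longrightarrow> \<bar>y k i - y k j\<bar> < q i j) \<and> q i j < y k i + y k j) F"
    if ij: "i < n" "j < n" for i j
  proof -
    have "((\<lambda>k. y k i + y k j) \<longlongrightarrow> x i + x j) F"
      using y ij by (intro tendsto_intros)
    from order_tendstoD(1)[OF this strictly_admissibleD(1)[OF x ij]]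
    have sum: "eventually (\<lambda>k. q i j < y k i + y k j) F" .
    have diff: "eventually (\<lambda>k. i \<noteq> j \<longrightarrow> \<bar>y k i - y k j\<bar> < q i j) F"
    proof (cases "i = j")
      case False
      have "((\<lambda>k. \<bar>y k i - y k j\<bar>) \<longlongrightarrow> \<bar>x i - x j\<bar>) F"
        using y ij by (intro tendsto_intros)
      from order_tendstoD(2)[OF this strictly_admissibleD(2)[OF x ij False]]
      show ?thesis
        by (rule eventually_mono) simp
    qed simp
    show ?thesis
      using eventually_conj[OF diff sum] .
  qed
  then show ?thesis
    unfolding strictly_admissible_def by (simp add: eventually_all_less)
qed

text \<open>Rational vectors are encoded as lists, so that they can be enumerated.\<close>

definition ratvec :: "rat list \<Rightarrow> nat \<Rightarrow> real" where
  "ratvec bs i = real_of_rat (bs ! i)"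

lemma ex_rat_seq_tendsto: "\<exists>s :: nat \<Rightarrow> rat. (\<lambda>k. real_of_rat (s k)) \<longlonglongrightarrow> x"
proof -
  obtain t where t: "\<And>k. t k \<in> \<rat>" and lim: "t \<longlonglongrightarrow> x"
    using Rats_closure_real closure_sequential by blast
  have "\<forall>k. \<exists>c. t k = real_of_rat c"
    using t by (blast elim: Rats_cases)
  then obtain s where "\<And>k. t k = real_of_rat (s k)"
    by metis
  then have "t = (\<lambda>k. real_of_rat (s k))"
    by (simp add: fun_eq_iff)
  with lim show ?thesis
    by blast
qed

lemma rational_near_strictly_admissible:
  assumes x: "strictly_admissible n q x" and "0 < \<epsilon>"
  obtains bs where "length bs = n" and "strictly_admissible n q (ratvec bs)"
    and "\<forall>i<n. \<bar>ratvec bs i - x i\<bar> < \<epsilon>"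
proof -
  have "\<forall>i. \<exists>s :: nat \<Rightarrow> rat. (\<lambda>k. real_of_rat (s k)) \<longlonglongrightarrow> x i"
    using ex_rat_seq_tendsto by blast
  then obtain s :: "nat \<Rightarrow> nat \<Rightarrow> rat" where s: "\<And>i. (\<lambda>k. real_of_rat (s i k)) \<longlonglongrightarrow> x i"
    by metis
  have "eventually (\<lambda>k. strictly_admissible n q (\<lambda>i. real_of_rat (s i k))) sequentially"
    using eventually_strictly_admissible[OF x s] .
  moreover have "eventually (\<lambda>k. \<forall>i<n. \<bar>real_of_rat (s i k) - x i\<bar> < \<epsilon>) sequentially"
    using eventually_all_close[OF s \<open>0 < \<epsilon>\<close>] .
  ultimately have "\<exists>k. strictly_admissible n q (\<lambda>i. real_of_rat (s i k))
      \<and> (\<forall>i<n. \<bar>real_of_rat (s i k) - x i\<bar> < \<epsilon>)"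
    by (intro eventually_happens'[OF sequentially_bot] eventually_conj)
  then obtain k where k: "strictly_admissible n q (\<lambda>i. real_of_rat (s i k))"
    "\<forall>i<n. \<bar>real_of_rat (s i k) - x i\<bar> < \<epsilon>"
    by blast
  define bs where "bs = map (\<lambda>i. s i k) [0..<n]"
  have ratvec_bs: "ratvec bs i = real_of_rat (s i k)" if "i < n" for i
    using that by (simp add: ratvec_def bs_def)
  show ?thesis
  proof
    show "length bs = n"
      by (simp add: bs_def)
    show "strictly_admissible n q (ratvec bs)"
      using k(1) strictly_admissible_cong[of n q q "ratvec bs"] ratvec_bs by simp
    show "\<forall>i<n. \<bar>ratvec bs i - x i\<bar> < \<epsilon>"
      using k(2) ratvec_bs by simp
  qed
qed

lemma rational_strictly_admissible_near:
  assumes "proper_corner n q" and "admissible n q a" and "0 < \<epsilon>"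
  obtains bs where "length bs = n" and "strictly_admissible n q (ratvec bs)"
    and "\<forall>i<n. \<bar>ratvec bs i - a i\<bar> < \<epsilon>"
proof -
  have "0 < \<epsilon> / 2"
    using assms(3) by simp
  then obtain x where x: "strictly_admissible n q x" "\<forall>i<n. \<bar>x i - a i\<bar> < \<epsilon> / 2"
    using strictly_admissible_near[OF assms(1,2)] by blast
  obtain bs where bs: "length bs = n" "strictly_admissible n q (ratvec bs)"
    "\<forall>i<n. \<bar>ratvec bs i - x i\<bar> < \<epsilon> / 2"
    using rational_near_strictly_admissible[OF x(1) \<open>0 < \<epsilon> / 2\<close>] by blast
  have "\<bar>ratvec bs i - a i\<bar> < \<epsilon>" if "i < n" for i
    using x(2)[rule_format, OF that] bs(3)[rule_format, OF that] unfolding abs_less_iff by linarith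
  with bs(1,2) show ?thesis
    using that by blast
qed

lemma universalI_rational:
  assumes proper: "proper_dm r"
    and realized: "\<And>bs \<epsilon>. strictly_admissible (length bs) r (ratvec bs) \<Longrightarrow> 0 < \<epsilon> \<Longrightarrow>
      \<exists>m. \<forall>i<length bs. \<bar>r i m - ratvec bs i\<bar> < \<epsilon>"
  shows "universal r"
  unfolding universal_def
proof (intro conjI allI impI proper)
  fix n a and \<epsilon> :: real
  assume a: "admissible n r a" and "0 < \<epsilon>"
  then have "0 < \<epsilon> / 2"
    by simp
  moreover have "proper_corner n r"
    using proper by (simp add: proper_dm_iff_proper_corners)
  ultimately obtain bs where bs: "length bs = n" "strictly_admissible n r (ratvec bs)"
    "\<forall>i<n. \<bar>ratvec bs i - a i\<bar> < \<epsilon> / 2"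
    using rational_strictly_admissible_near a by metis
  then obtain m where m: "\<forall>i<n. \<bar>r i m - ratvec bs i\<bar> < \<epsilon> / 2"
    using realized \<open>0 < \<epsilon> / 2\<close> by blast
  have "\<bar>r i m - a i\<bar> < \<epsilon>" if "i < n" for i
    using m[rule_format, OF that] bs(3)[rule_format, OF that] unfolding abs_less_iff by linarith
  then show "\<exists>m. \<forall>i<n. \<bar>r i m - a i\<bar> < \<epsilon>"
    by blast
qed

section \<open>Katetov extensions\<close>

text \<open>The largest function on the first \<open>m\<close> points that is \<open>1\<close>-Lipschitz for \<open>r\<close> and
  agrees with \<open>a\<close> on the first \<open>n\<close> points.\<close>

definition katetov :: "(nat \<Rightarrow> nat \<Rightarrow> real) \<Rightarrow> nat \<Rightarrow> (nat \<Rightarrow> real) \<Rightarrow> nat \<Rightarrow> real" where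
  "katetov r n a x = (MIN i\<in>{..<n}. a i + r x i)"

lemma katetov_le: "i < n \<Longrightarrow> katetov r n a x \<le> a i + r x i"
  unfolding katetov_def by (simp add: Min_le)

lemma katetov_attained: "0 < n \<Longrightarrow> \<exists>i<n. katetov r n a x = a i + r x i"
  unfolding katetov_def using Min_in[of "(\<lambda>i. a i + r x i) ` {..<n}"] by fastforce

lemma katetov_eq:
  assumes r: "proper_corner m r" and "n \<le> m" and a: "admissible n r a" and x: "x < n"
  shows "katetov r n a x = a x"
proof (rule antisym)
  show "katetov r n a x \<le> a x"
    using katetov_le[OF x, where a = a and r = r and x = x] proper_cornerD(1)[OF r] x \<open>n \<le> m\<close>
    by simp
  have "0 < n"
    using x by simp
  then obtain l where l: "l < n" "katetov r n a x = a l + r x l"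
    using katetov_attained by blast
  then show "a x \<le> katetov r n a x"
    using admissibleD[OF a x l(1)] unfolding abs_le_iff by linarith
qed

lemma katetov_lipschitz:
  assumes r: "proper_corner m r" and "0 < n" "n \<le> m" and xy: "x < m" "y < m"
  shows "katetov r n a x \<le> katetov r n a y + r x y"
proof -
  obtain l where l: "l < n" "katetov r n a y = a l + r y l"
    using katetov_attained \<open>0 < n\<close> by blast
  have "katetov r n a x \<le> a l + r x l"
    using katetov_le[OF l(1)] .
  also have "\<dots> \<le> a l + r x y + r y l"
    using proper_cornerD(4)[OF r xy(1) _ xy(2), of l] l(1) \<open>n \<le> m\<close> by simp
  finally show ?thesis
    using l(2) by simp
qed

lemma admissible_katetov:
  assumes r: "proper_corner m r" and "0 < n" "n \<le> m" and a: "admissible n r a"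
  shows "admissible m r (katetov r n a)"
  unfolding admissible_def
proof (intro allI impI conjI)
  fix x y assume xy: "x < m" "y < m"
  show "\<bar>katetov r n a x - katetov r n a y\<bar> \<le> r x y"
    using katetov_lipschitz[OF r \<open>0 < n\<close> \<open>n \<le> m\<close> xy, where a = a]
      katetov_lipschitz[OF r \<open>0 < n\<close> \<open>n \<le> m\<close> xy(2,1), where a = a]
      proper_cornerD(2)[OF r xy] unfolding abs_le_iff by linarith
  obtain l l' where l: "l < n" "katetov r n a x = a l + r x l"
    and l': "l' < n" "katetov r n a y = a l' + r y l'"
    using katetov_attained \<open>0 < n\<close> by metis
  then have lm: "l < m" "l' < m"
    using \<open>n \<le> m\<close> by auto
  have "r x y \<le> r x l + r l l' + r l' y"
    using proper_cornerD(4)[OF r xy(1) xy(2) lm(1)] proper_cornerD(4)[OF r lm(1) xy(2) lm(2)]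
    by simp
  also have "r l l' \<le> a l + a l'"
    using admissibleD[OF a l(1) l'(1)] by simp
  finally show "r x y \<le> katetov r n a x + katetov r n a y"
    using l(2) l'(2) proper_cornerD(2)[OF r lm(2) xy(2)] by simp
qed

lemma katetov_pos:
  assumes r: "proper_corner m r" and "0 < n" "n \<le> m" and a: "\<And>i. i < n \<Longrightarrow> 0 < a i"
    and x: "x < m"
  shows "0 < katetov r n a x"
proof -
  obtain l where "l < n" "katetov r n a x = a l + r x l"
    using katetov_attained \<open>0 < n\<close> by blast
  then show ?thesis
    using a proper_corner_nonneg[OF r x, of l] \<open>n \<le> m\<close> by (simp add: add_pos_nonneg)
qed

definition border :: "(nat \<Rightarrow> nat \<Rightarrow> real) \<Rightarrow> nat \<Rightarrow> (nat \<Rightarrow> real) \<Rightarrow> nat \<Rightarrow> nat \<Rightarrow> real" where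
  "border r m e x y =
     (if x = m \<and> y = m then 0 else if x = m then e y else if y = m then e x else r x y)"

lemma proper_corner_border:
  assumes r: "proper_corner m r" and e: "admissible m r e" and pos: "\<And>x. x < m \<Longrightarrow> 0 < e x"
  shows "proper_corner (Suc m) (border r m e)"
proof -
  let ?b = "border r m e"
  have e_bounds: "e i \<le> e j + r i j" "r i j \<le> e i + e j" if "i < m" "j < m" for i j
    using admissibleD[OF e that] unfolding abs_le_iff by auto
  have cases: "i < m \<or> i = m" if "i < Suc m" for i
    using that by auto
  have "?b i j \<le> ?b i k + ?b k j" if "i < Suc m" "j < Suc m" "k < Suc m" for i j k
    using cases[OF that(1)] cases[OF that(2)] cases[OF that(3)]
      proper_cornerD(4)[OF r, of i j k] proper_cornerD(2)[OF r, of j k] pos[of k]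
      e_bounds(1)[of i k] e_bounds(1)[of j k] e_bounds(2)[of i j]
    by (auto simp: border_def)
  moreover have "?b i i = 0" if "i < Suc m" for i
    using cases[OF that] proper_cornerD(1)[OF r, of i] by (auto simp: border_def)
  moreover have "0 < ?b i j" if "i < Suc m" "j < Suc m" "i \<noteq> j" for i j
    using cases[OF that(1)] cases[OF that(2)] proper_cornerD(3)[OF r, of i j] pos[of i] pos[of j]
      that(3)
    by (auto simp: border_def)
  moreover have "?b i j = ?b j i" if "i < Suc m" "j < Suc m" for i j
    using cases[OF that(1)] cases[OF that(2)] proper_cornerD(2)[OF r, of i j]
    by (auto simp: border_def)
  ultimately show ?thesis
    unfolding proper_corner_def by blast
qed

section \<open>Completing a proper corner to a universal matrix\<close>

text \<open>A task that cannot be served at the current stage still adds a point, at distance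
  \<open>1 + r x 0\<close> from each old point \<open>x\<close>, so that the chain grows by one point per stage.\<close>

definition katetov_step :: "(nat \<Rightarrow> nat \<Rightarrow> real) \<Rightarrow> nat \<Rightarrow> rat list \<Rightarrow> nat \<Rightarrow> real" where
  "katetov_step r m bs =
     (if 0 < length bs \<and> length bs \<le> m \<and> strictly_admissible (length bs) r (ratvec bs)
      then katetov r (length bs) (ratvec bs) else katetov r 1 (\<lambda>_. 1))"

lemma proper_corner_border_katetov:
  assumes r: "proper_corner m r" and "0 < n" "n \<le> m"
    and a: "admissible n r a" and pos: "\<And>i. i < n \<Longrightarrow> 0 < a i"
  shows "proper_corner (Suc m) (border r m (katetov r n a))"
  using assms by (intro proper_corner_border r admissible_katetov katetov_pos) auto

lemma proper_corner_border_katetov_step: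
  assumes r: "proper_corner m r" and "0 < m"
  shows "proper_corner (Suc m) (border r m (katetov_step r m bs))"
proof (cases "0 < length bs \<and> length bs \<le> m \<and> strictly_admissible (length bs) r (ratvec bs)")
  case True
  then have "proper_corner (length bs) r"
    using proper_corner_mono[OF r] by blast
  with True have "admissible (length bs) r (ratvec bs)" "\<And>i. i < length bs \<Longrightarrow> 0 < ratvec bs i"
    using strictly_admissible_imp_admissible strictly_admissible_pos by blast+
  with True show ?thesis
    unfolding katetov_step_def if_P[OF True] by (simp add: proper_corner_border_katetov[OF r])
next
  case False
  have "admissible 1 r (\<lambda>_. 1)"
    using proper_cornerD(1)[OF r \<open>0 < m\<close>] by (simp add: admissible_def)
  then show ?thesis
    unfolding katetov_step_def if_not_P[OF False]
    using proper_corner_border_katetov[OF r, of 1] \<open>0 < m\<close> by simp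
qed

lemma katetov_step_realizes:
  assumes r: "proper_corner m r" and "0 < length bs" "length bs \<le> m"
    and bs: "strictly_admissible (length bs) r (ratvec bs)" and i: "i < length bs"
  shows "katetov_step r m bs i = ratvec bs i"
proof -
  have "admissible (length bs) r (ratvec bs)"
    using strictly_admissible_imp_admissible[OF proper_corner_mono[OF r] bs] \<open>length bs \<le> m\<close> .
  then show ?thesis
    using assms katetov_eq[OF r] unfolding katetov_step_def by simp
qed

definition task :: "nat \<Rightarrow> rat list" where
  "task j = from_nat (fst (prod_decode j))"

lemma task_infinitely_often: "\<exists>j\<ge>n. task j = bs"
proof
  let ?j = "prod_encode (to_nat bs, n)"
  show "n \<le> ?j \<and> task ?j = bs"
    by (simp add: le_prod_encode_2 task_def)
qed

primrec urysohn_seq :: "nat \<Rightarrow> (nat \<Rightarrow> nat \<Rightarrow> real) \<Rightarrow> nat \<Rightarrow> nat \<Rightarrow> nat \<Rightarrow> real" where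
  "urysohn_seq N q 0 = q"
| "urysohn_seq N q (Suc j) =
     border (urysohn_seq N q j) (N + j) (katetov_step (urysohn_seq N q j) (N + j) (task j))"

definition urysohn_matrix :: "nat \<Rightarrow> (nat \<Rightarrow> nat \<Rightarrow> real) \<Rightarrow> nat \<Rightarrow> nat \<Rightarrow> real" where
  "urysohn_matrix N q x y = urysohn_seq N q (Suc (max x y)) x y"

lemma proper_corner_urysohn_seq:
  assumes "proper_corner N q" and "0 < N"
  shows "proper_corner (N + j) (urysohn_seq N q j)"
  by (induction j) (simp_all add: assms proper_corner_border_katetov_step)

lemma urysohn_seq_stable:
  "j \<le> k \<Longrightarrow> x < N + j \<Longrightarrow> y < N + j \<Longrightarrow> urysohn_seq N q k x y = urysohn_seq N q j x y"
  by (induction k rule: dec_induct) (auto simp: border_def)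

lemma urysohn_matrix_eq_seq:
  assumes "x < N + j" and "y < N + j"
  shows "urysohn_matrix N q x y = urysohn_seq N q j x y"
proof -
  let ?k = "max j (Suc (max x y))"
  have "urysohn_seq N q ?k x y = urysohn_seq N q j x y"
    using assms by (intro urysohn_seq_stable) auto
  moreover have "urysohn_seq N q ?k x y = urysohn_seq N q (Suc (max x y)) x y"
    by (intro urysohn_seq_stable) auto
  ultimately show ?thesis
    unfolding urysohn_matrix_def by simp
qed

lemma urysohn_matrix_extends: "x < N \<Longrightarrow> y < N \<Longrightarrow> urysohn_matrix N q x y = q x y"
  using urysohn_matrix_eq_seq[where j = 0] by simp

lemma proper_dm_urysohn_matrix:
  assumes "proper_corner N q" and "0 < N"
  shows "proper_dm (urysohn_matrix N q)"
  unfolding proper_dm_iff_proper_corners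
proof
  fix n
  have "proper_corner n (urysohn_seq N q n)"
    using proper_corner_mono[OF proper_corner_urysohn_seq[OF assms]] by simp
  then show "proper_corner n (urysohn_matrix N q)"
    by (subst proper_corner_cong[where r' = "urysohn_seq N q n"]) (auto simp: urysohn_matrix_eq_seq)
qed

lemma universal_urysohn_matrix:
  assumes q: "proper_corner N q" and "0 < N"
  shows "universal (urysohn_matrix N q)"
proof (rule universalI_rational)
  show "proper_dm (urysohn_matrix N q)"
    using proper_dm_urysohn_matrix[OF assms] .
  fix bs and \<epsilon> :: real
  assume bs: "strictly_admissible (length bs) (urysohn_matrix N q) (ratvec bs)" and "0 < \<epsilon>"
  obtain j where j: "length bs \<le> j" "task j = bs"
    using task_infinitely_often by blast
  let ?r = "urysohn_seq N q j"
  have r: "proper_corner (N + j) ?r"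
    using proper_corner_urysohn_seq[OF assms] .
  have "urysohn_matrix N q x y = ?r x y" if "x < length bs" "y < length bs" for x y
    using that j(1) by (intro urysohn_matrix_eq_seq) auto
  then have bs_r: "strictly_admissible (length bs) ?r (ratvec bs)"
    using bs strictly_admissible_cong[of "length bs" "urysohn_matrix N q" ?r] by simp
  have "urysohn_matrix N q i (N + j) = ratvec bs i" if i: "i < length bs" for i
  proof -
    have "urysohn_matrix N q i (N + j) = urysohn_seq N q (Suc j) i (N + j)"
      using i j(1) by (intro urysohn_matrix_eq_seq) auto
    also have "\<dots> = katetov_step ?r (N + j) bs i"
      using i j by (simp add: border_def)
    also have "\<dots> = ratvec bs i"
      using i j(1) \<open>0 < N\<close> by (intro katetov_step_realizes[OF r _ _ bs_r]) auto
    finally show ?thesis .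
  qed
  then have "\<forall>i<length bs. \<bar>urysohn_matrix N q i (N + j) - ratvec bs i\<bar> < \<epsilon>"
    using \<open>0 < \<epsilon>\<close> by simp
  then show "\<exists>m. \<forall>i<length bs. \<bar>urysohn_matrix N q i m - ratvec bs i\<bar> < \<epsilon>"
    by blast
qed

section \<open>Density and the \<open>G\<^sub>\<delta>\<close> property\<close>

lemma dist_matrixD:
  assumes "dist_matrix r"
  shows "r i i = 0" and "0 \<le> r i j" and "r i j = r j i" and "r i j \<le> r i k + r k j"
  using assms unfolding dist_matrix_def by auto

lemma proper_dm_add_off_diagonal:
  assumes r: "dist_matrix r" and "0 < d"
  shows "proper_dm (\<lambda>x y. r x y + (if x = y then 0 else d))"
  unfolding proper_dm_def dist_matrix_def
proof (intro conjI allI impI)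
  fix i j k
  show "r i j + (if i = j then 0 else d)
      \<le> r i k + (if i = k then 0 else d) + (r k j + (if k = j then 0 else d))"
    using dist_matrixD(4)[OF r, of i j k] \<open>0 < d\<close> by auto
qed (use dist_matrixD[OF r] \<open>0 < d\<close> in \<open>auto simp: add_nonneg_pos\<close>)

lemma tendsto_componentwise_iff:
  "((f :: 'a \<Rightarrow> 'b \<Rightarrow> 'c::topological_space) \<longlongrightarrow> l) F \<longleftrightarrow> (\<forall>i. ((\<lambda>x. f x i) \<longlongrightarrow> l i) F)"
  using limitin_componentwise[of "\<lambda>i. euclidean" UNIV f l F]
  by (simp add: euclidean_product_topology)

text \<open>Perturbing \<open>r\<close> by \<open>1/(k+1)\<close> off the diagonal makes its corners proper; completing the
  \<open>(k+1)\<close>-corner to a universal matrix changes only entries that escape to infinity.\<close>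

lemma distR_subset_closure_universalM: "distR \<subseteq> closure universalM"
proof
  fix r assume "r \<in> distR"
  then have r: "dist_matrix r"
    by (simp add: distR_def)
  define q where "q k x y = r x y + (if x = y then 0 else inverse (real (Suc k)))" for k x y
  define u where "u k = urysohn_matrix (Suc k) (q k)" for k
  have "proper_corner (Suc k) (q k)" for k
    using proper_dm_add_off_diagonal[OF r, of "inverse (real (Suc k))"]
    by (simp add: q_def[abs_def] proper_dm_iff_proper_corners)
  then have "u k \<in> universalM" for k
    by (simp add: u_def universalM_def universal_urysohn_matrix)
  moreover have "u \<longlonglongrightarrow> r"
    unfolding tendsto_componentwise_iff
  proof (intro allI)
    fix x y
    have "eventually (\<lambda>k. q k x y = u k x y) sequentially"
      using eventually_ge_at_top[of "max x y"]
      by (rule eventually_mono) (simp add: u_def urysohn_matrix_extends)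
    moreover have "(\<lambda>k. q k x y) \<longlonglongrightarrow> r x y"
      using LIMSEQ_inverse_real_of_nat_add[of "r x y"] by (cases "x = y") (simp_all add: q_def)
    ultimately show "(\<lambda>k. u k x y) \<longlonglongrightarrow> r x y"
      using tendsto_cong by fastforce
  qed
  ultimately show "r \<in> closure universalM"
    unfolding closure_sequential by blast
qed

text \<open>Vacuous when \<open>bs\<close> is not admissible: admissibility is a closed condition, which
  keeps the set open.\<close>

definition realized_near :: "rat list \<Rightarrow> nat \<Rightarrow> (nat \<Rightarrow> nat \<Rightarrow> real) set" where
  "realized_near bs k = {r. admissible (length bs) r (ratvec bs) \<longrightarrow>
     (\<exists>m. \<forall>i<length bs. \<bar>r i m - ratvec bs i\<bar> < inverse (real (Suc k)))}"

lemma universal_iff_realized_near: "universal r \<longleftrightarrow> proper_dm r \<and> (\<forall>bs k. r \<in> realized_near bs k)"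
proof
  assume "universal r"
  then show "proper_dm r \<and> (\<forall>bs k. r \<in> realized_near bs k)"
    unfolding universal_def realized_near_def by simp
next
  assume r: "proper_dm r \<and> (\<forall>bs k. r \<in> realized_near bs k)"
  show "universal r"
  proof (rule universalI_rational)
    fix bs and \<epsilon> :: real
    assume bs: "strictly_admissible (length bs) r (ratvec bs)" and "0 < \<epsilon>"
    obtain k where k: "inverse (real (Suc k)) < \<epsilon>"
      using reals_Archimedean[OF \<open>0 < \<epsilon>\<close>] by blast
    have "admissible (length bs) r (ratvec bs)"
      using r bs by (simp add: proper_dm_iff_proper_corners strictly_admissible_imp_admissible)
    then obtain m where "\<forall>i<length bs. \<bar>r i m - ratvec bs i\<bar> < inverse (real (Suc k))"
      using r unfolding realized_near_def by blast
    then have "\<forall>i<length bs. \<bar>r i m - ratvec bs i\<bar> < \<epsilon>"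
      using k by (meson order.strict_trans)
    then show "\<exists>m. \<forall>i<length bs. \<bar>r i m - ratvec bs i\<bar> < \<epsilon>"
      by blast
  qed (use r in blast)
qed

lemma continuous_on_entry:
  "continuous_on S (\<lambda>r :: 'a \<Rightarrow> 'b \<Rightarrow> 'c::topological_space. r i j)"
  using continuous_on_product_then_coordinatewise[OF
      continuous_on_product_then_coordinatewise[OF continuous_on_id]] .

lemma closed_admissible: "closed {r. admissible n r a}"
  unfolding admissible_def
  by (intro closed_Collect_all closed_Collect_imp open_Collect_const closed_Collect_conj
      closed_Collect_le continuous_on_const continuous_on_entry)

lemma open_realized_near: "open (realized_near bs k)"
proof -
  have "open {r :: nat \<Rightarrow> nat \<Rightarrow> real. \<forall>i<length bs. \<bar>r i m - ratvec bs i\<bar> < inverse (real (Suc k))}"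
    for m
  proof -
    have "{r :: nat \<Rightarrow> nat \<Rightarrow> real. \<forall>i<length bs. \<bar>r i m - ratvec bs i\<bar> < inverse (real (Suc k))}
        = (\<Inter>i<length bs. {r. \<bar>r i m - ratvec bs i\<bar> < inverse (real (Suc k))})"
      by auto
    then show ?thesis
      by (simp add: open_INT open_Collect_less continuous_on_rabs continuous_on_diff
          continuous_on_const continuous_on_entry)
  qed
  then show ?thesis
    unfolding realized_near_def by (intro open_Collect_imp open_Collect_ex closed_admissible)
qed

lemma gdelta_in_universalM: "gdelta_in (top_of_set distR) universalM"
proof -
  define P where "P i j = {r :: nat \<Rightarrow> nat \<Rightarrow> real. i = j \<or> 0 < r i j}" for i j
  define T where "T = range (case_prod realized_near) \<union> range (case_prod P)"
  have in_T: "r \<in> \<Inter>T \<longleftrightarrow> (\<forall>bs k. r \<in> realized_near bs k) \<and> (\<forall>i j. i \<noteq> j \<longrightarrow> 0 < r i j)"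
    for r
    unfolding T_def Inter_Un_distrib by (auto simp: P_def)
  have "universalM = \<Inter>T \<inter> distR"
    unfolding set_eq_iff Int_iff in_T
    by (auto simp: universalM_def universal_iff_realized_near proper_dm_def distR_def)
  moreover have "gdelta_in euclidean (\<Inter>T)"
  proof (rule gdelta_in_Inter)
    show "countable T"
      unfolding T_def by simp
    show "T \<noteq> {}"
      unfolding T_def by simp
    have "open (P i j)" for i j
      unfolding P_def
      by (simp add: open_Collect_disj open_Collect_less continuous_on_const continuous_on_entry)
    then show "gdelta_in euclidean S" if "S \<in> T" for S
      using that open_realized_near by (auto simp: T_def intro: open_imp_gdelta_in)
  qed
  ultimately show ?thesis
    unfolding gdelta_in_subtopology by blast
qed

theorem theorem1:
  shows "universalM \<noteq> {} \<and> universalM \<subseteq> distR \<and>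
         distR \<subseteq> closure universalM \<and>
         gdelta_in (top_of_set distR) universalM"
proof (intro conjI)
  have "(\<lambda>_ _. 0) \<in> distR"
    by (simp add: distR_def dist_matrix_def)
  then show "universalM \<noteq> {}"
    using distR_subset_closure_universalM by auto
  show "universalM \<subseteq> distR"
    by (auto simp: universalM_def universal_def proper_dm_def distR_def)
qed (fact distR_subset_closure_universalM gdelta_in_universalM)+

end
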